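(* Let $\mathbb{F}_q$ be a finite field of characteristic $p\geq 5$ and let $A(x)$ be an Alltop function over $\mathbb{F}_q$. For $a,b\in\mathbb{F}_q$ let $\vec{v}_{ab}=\frac{1}{\sqrt{q}}\big(\omega_p^{\mathrm{tr}(A(x+a)+b(x+a))}\big)_{x\in\mathbb{F}_q}\in\mathbb{C}^q$, and let $V_a=\{\vec{v}_{ab}:b\in\mathbb{F}_q\}$. Then the standard basis $E$ of $\mathbb{C}^q$ together with the sets $V_a$, $a\in\mathbb{F}_q$, form a complete set of $q+1$ mutually unbiased bases in $\mathbb{C}^q$.
   Context: $\omega_p=e^{2\pi i/p}$ and $\mathrm{tr}$ is the absolute trace from $\mathbb{F}_q$ to $\mathbb{F}_p$. For $f:\mathbb{F}_q\to\mathbb{F}_q$, $\Delta_{f,a}(x)=f(x+a)-f(x)$; $f$ is planar if $x\mapsto\Delta_{f,a}(x)$ is a bijection for all $a\neq0$; $A$ is an Alltop function if $\Delta_{A,a}$ is planar for all $a\neq0$. Two orthonormal bases $B_1,B_2$ of $\mathbb{C}^d$ are unbiased if $|\langle\vec{x}|\vec{y}\rangle|=1/\sqrt{d}$ for all $\vec{x}\in B_1,\vec{y}\in B_2$ (standard Hermitian inner product); a set of pairwise unbiased orthonormal bases is a set of mutually unbiased bases, and it is complete if it has $d+1$ bases. *)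

theory Defs
  imports Complex_Main "HOL-Library.Cardinality"
begin

text \<open>Finite fields are modelled by a type of class finite field; q = CARD('a), p = CHAR('a).\<close>

definition ext_degree :: "'a::{finite,field} itself \<Rightarrow> nat" where
  "ext_degree t = (THE n. CHAR('a) ^ n = CARD('a))"

definition abs_trace :: "'a::{finite,field} \<Rightarrow> 'a" where
  "abs_trace x = (\<Sum>i<ext_degree TYPE('a). x ^ (CHAR('a) ^ i))"

text \<open>The value of the trace as an integer in {0..p-1} (it lies in the prime field).\<close>
definition trace_nat :: "'a::{finite,field} \<Rightarrow> nat" where
  "trace_nat x = (THE k. k < CHAR('a) \<and> of_nat k = abs_trace x)"

definition omega_tr :: "'a::{finite,field} \<Rightarrow> complex" where
  "omega_tr x = exp (2 * of_real pi * \<i> / of_nat CHAR('a)) ^ trace_nat x"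

definition Delta :: "('a::ab_group_add \<Rightarrow> 'a) \<Rightarrow> 'a \<Rightarrow> 'a \<Rightarrow> 'a" where
  "Delta f a = (\<lambda>x. f (x + a) - f x)"

definition planar :: "('a::ab_group_add \<Rightarrow> 'a) \<Rightarrow> bool" where
  "planar f \<longleftrightarrow> (\<forall>a. a \<noteq> 0 \<longrightarrow> bij (Delta f a))"

definition alltop :: "('a::ab_group_add \<Rightarrow> 'a) \<Rightarrow> bool" where
  "alltop A \<longleftrightarrow> (\<forall>a. a \<noteq> 0 \<longrightarrow> planar (Delta A a))"

text \<open>Vectors of C^d with d = CARD('i) are functions 'i \<Rightarrow> complex; standard Hermitian inner product.\<close>
definition hinner :: "('i::finite \<Rightarrow> complex) \<Rightarrow> ('i \<Rightarrow> complex) \<Rightarrow> complex" where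
  "hinner x y = (\<Sum>i\<in>UNIV. cnj (x i) * y i)"

definition orthonormal_basis :: "('i::finite \<Rightarrow> complex) set \<Rightarrow> bool" where
  "orthonormal_basis B \<longleftrightarrow> card B = CARD('i) \<and>
     (\<forall>x\<in>B. \<forall>y\<in>B. hinner x y = (if x = y then 1 else 0))"

definition unbiased :: "('i::finite \<Rightarrow> complex) set \<Rightarrow> ('i \<Rightarrow> complex) set \<Rightarrow> bool" where
  "unbiased B1 B2 \<longleftrightarrow> (\<forall>x\<in>B1. \<forall>y\<in>B2. cmod (hinner x y) = 1 / sqrt (real CARD('i)))"

definition mutually_unbiased :: "('i::finite \<Rightarrow> complex) set set \<Rightarrow> bool" where
  "mutually_unbiased \<B> \<longleftrightarrow> (\<forall>B\<in>\<B>. orthonormal_basis B) \<and>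
     (\<forall>B1\<in>\<B>. \<forall>B2\<in>\<B>. B1 \<noteq> B2 \<longrightarrow> unbiased B1 B2)"

definition complete_MUB :: "('i::finite \<Rightarrow> complex) set set \<Rightarrow> bool" where
  "complete_MUB \<B> \<longleftrightarrow> mutually_unbiased \<B> \<and> card \<B> = CARD('i) + 1"

definition std_basis :: "('i::finite \<Rightarrow> complex) set" where
  "std_basis = {(\<lambda>j. if j = i then 1 else 0) | i. True}"

end

theory Submission
  imports Defs "HOL-Computational_Algebra.Polynomial" "HOL-Computational_Algebra.Primes"
    "HOL-Number_Theory.Cong"
begin

text \<open>
  Write \<open>\<psi>(x) = \<omega>\<^sub>p\<^bsup>tr(x)\<^esup>\<close>. Since the trace is additive and lands in the prime field,
  \<open>\<psi>\<close> is a nontrivial additive character, so \<open>\<Sum>\<^sub>x \<psi>(f x) = 0\<close> for every bijection \<open>f\<close>.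
  For two vectors with the same shift \<open>a\<close> the exponent in the inner product is
  \<open>(b' - b)(x + a)\<close>, which gives orthogonality. For shifts \<open>a \<noteq> a'\<close> it is
  \<open>G x = \<Delta>\<^bsub>A,a'-a\<^esub>(x + a) + (b' - b) x + const\<close>, which is planar because \<open>A\<close> is Alltop,
  and for planar \<open>G\<close> expanding \<open>|\<Sum>\<^sub>x \<psi>(G x)|\<^sup>2 = \<Sum>\<^sub>h \<Sum>\<^sub>y \<psi>(\<Delta>\<^bsub>G,h\<^esub> y)\<close> leaves only
  the term \<open>h = 0\<close>, i.e.\ \<open>q\<close>. All entries of the vectors have modulus \<open>1/\<surd>q\<close>, which makes
  each \<open>V\<^sub>a\<close> unbiased to the standard basis.
\<close>

section \<open>Finite fields\<close>

lemma prime_CHAR_finite_field: "prime CHAR('a::{finite,field})"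
  by (intro prime_CHAR_semidom finite_imp_CHAR_pos) simp

lemma CHAR_finite_field_ge_2: "CHAR('a::{finite,field}) \<ge> 2"
  using prime_CHAR_finite_field[where 'a='a] prime_ge_2_nat by blast

lemma card_finite_field_ge_2: "CARD('a::{finite,field}) \<ge> 2"
proof -
  have "card {0::'a, 1} \<le> CARD('a)" by (rule card_mono) auto
  thus ?thesis by simp
qed

lemma of_nat_eq_iff_below_CHAR:
  assumes "k < CHAR('a::{finite,field})" "j < CHAR('a)"
  shows "(of_nat k :: 'a) = of_nat j \<longleftrightarrow> k = j"
  using assms of_nat_eq_iff_cong_CHAR[where 'a='a] cong_less_modulus_unique_nat by blast

lemma power_card_finite_field: "(x::'a::{finite,field}) ^ CARD('a) = x"
proof (cases "x = 0")
  case False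
  have "(\<Prod>y\<in>UNIV-{0}. x * y) = (\<Prod>y\<in>UNIV-{0::'a}. y)"
    by (rule prod.reindex_bij_witness[of _ "\<lambda>y. y / x" "\<lambda>y. x * y"]) (use False in auto)
  moreover have "(\<Prod>y\<in>UNIV-{0}. x * y) = x ^ (CARD('a) - 1) * (\<Prod>y\<in>UNIV-{0::'a}. y)"
    by (simp only: prod.distrib prod_constant card_Diff_singleton[OF UNIV_I] card_UNIV_def)
  moreover have "(\<Prod>y\<in>UNIV-{0::'a}. y) \<noteq> 0" by simp
  ultimately have "x ^ (CARD('a) - 1) = 1" by simp
  moreover have "CARD('a) = Suc (CARD('a) - 1)" using card_finite_field_ge_2[where 'a='a] by simp
  ultimately show ?thesis by (metis mult_1_right power_Suc)
qed (use card_finite_field_ge_2[where 'a='a] in simp)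

definition prime_subfield :: "'a::{finite,field} set" where
  "prime_subfield = {c. c ^ CHAR('a) = c}"

lemma of_nat_in_prime_subfield: "(of_nat k :: 'a::{finite,field}) \<in> prime_subfield"
proof (induction k)
  case 0 show ?case using CHAR_finite_field_ge_2[where 'a='a] by (simp add: prime_subfield_def)
next
  case (Suc k)
  then show ?case
    by (simp add: prime_subfield_def freshmans_dream[OF prime_CHAR_finite_field] add.commute)
qed

text \<open>The prime subfield is the root set of \<open>X\<^sup>p - X\<close>, which has at most \<open>p\<close> elements.\<close>
lemma prime_subfield_eq: "(prime_subfield :: 'a::{finite,field} set) = of_nat ` {..<CHAR('a)}"
proof -
  let ?p = "CHAR('a)"
  define P :: "'a poly" where "P = monom 1 ?p + [:0, -1:]"
  have "degree P = ?p" unfolding P_def using CHAR_finite_field_ge_2[where 'a='a]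
    by (subst degree_add_eq_left) (auto simp: degree_monom_eq)
  moreover from this have "P \<noteq> 0" using CHAR_finite_field_ge_2[where 'a='a] by auto
  moreover have "prime_subfield = {c. poly P c = 0}"
    unfolding P_def prime_subfield_def by (auto simp: poly_monom)
  ultimately have le: "card (prime_subfield :: 'a set) \<le> ?p"
    using card_poly_roots_bound[of P] by simp
  have "inj_on (of_nat :: nat \<Rightarrow> 'a) {..<?p}"
    by (rule inj_onI) (simp add: of_nat_eq_iff_below_CHAR)
  hence card: "card (of_nat ` {..<?p} :: 'a set) = ?p" by (simp add: card_image)
  have sub: "of_nat ` {..<?p} \<subseteq> (prime_subfield :: 'a set)"
    by (auto intro: of_nat_in_prime_subfield)
  have "card (prime_subfield :: 'a set) = ?p"
    using card_mono[OF finite sub] card le by simp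
  with card_subset_eq[OF finite sub] card show ?thesis by simp
qed

lemma card_prime_subfield: "card (prime_subfield :: 'a::{finite,field} set) = CHAR('a)"
proof -
  have "inj_on (of_nat :: nat \<Rightarrow> 'a) {..<CHAR('a)}"
    by (rule inj_onI) (simp add: of_nat_eq_iff_below_CHAR)
  thus ?thesis by (simp add: prime_subfield_eq card_image)
qed

lemma prime_subfield_add: "c \<in> prime_subfield \<Longrightarrow> d \<in> prime_subfield \<Longrightarrow> c + d \<in> prime_subfield"
  by (simp add: prime_subfield_def freshmans_dream[OF prime_CHAR_finite_field])

lemma prime_subfield_uminus:
  assumes "c \<in> prime_subfield" shows "- c \<in> prime_subfield"
proof -
  have "(c + - c) ^ CHAR('a) = c ^ CHAR('a) + (- c) ^ CHAR('a)"
    by (rule freshmans_dream[OF prime_CHAR_finite_field refl])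
  hence "c + (- c) ^ CHAR('a) = 0"
    using assms CHAR_finite_field_ge_2[where 'a='a] by (simp add: prime_subfield_def power_0_left)
  thus ?thesis by (simp add: prime_subfield_def add_eq_0_iff)
qed

lemma prime_subfield_inverse: "c \<in> prime_subfield \<Longrightarrow> inverse c \<in> prime_subfield"
  by (simp add: prime_subfield_def power_inverse)

lemma prime_subfield_power_CHAR_power: "c \<in> prime_subfield \<Longrightarrow> c ^ (CHAR('a) ^ i) = (c::'a::{finite,field})"
  by (induction i) (simp_all add: prime_subfield_def power_mult)

definition add_closed :: "'a::{finite,field} set \<Rightarrow> bool" where
  "add_closed H \<longleftrightarrow> 0 \<in> H \<and> (\<forall>x\<in>H. \<forall>y\<in>H. x + y \<in> H)"

lemma add_closed_prime_subfield_mult: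
  assumes H: "add_closed H" and "c \<in> prime_subfield" "x \<in> H"
  shows "c * x \<in> H"
proof -
  obtain k where "c = of_nat k" using assms(2) by (auto simp: prime_subfield_eq)
  moreover have "of_nat k * x \<in> H" for k
    using H \<open>x \<in> H\<close> by (induction k) (auto simp: add_closed_def distrib_right)
  ultimately show ?thesis by simp
qed

lemma add_closed_diff:
  assumes H: "add_closed H" and "x \<in> H" "y \<in> H"
  shows "x - y \<in> H"
proof -
  have "(- 1 :: 'a) \<in> prime_subfield" by (intro prime_subfield_uminus) (simp add: prime_subfield_def)
  hence "- 1 * y \<in> H" by (rule add_closed_prime_subfield_mult[OF H _ assms(3)])
  hence "x + - 1 * y \<in> H" using H assms(2) by (simp only: add_closed_def)
  thus ?thesis by simp
qed

lemma add_closed_extend: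
  fixes H :: "'a::{finite,field} set"
  assumes H: "add_closed H" and h: "h \<notin> H"
  defines "H' \<equiv> (\<lambda>(x, c). x + c * h) ` (H \<times> prime_subfield)"
  shows "add_closed H'" "card H' = CHAR('a) * card H"
proof -
  show "add_closed H'"
    unfolding add_closed_def
  proof (intro conjI ballI)
    have "(0, 0) \<in> H \<times> (prime_subfield :: 'a set)"
      using H CHAR_finite_field_ge_2[where 'a='a] by (simp add: add_closed_def prime_subfield_def)
    thus "0 \<in> H'" unfolding H'_def by force
  next
    fix u w assume "u \<in> H'" "w \<in> H'"
    then obtain x c y d where "u = x + c * h" "w = y + d * h" and
      "x \<in> H" "y \<in> H" "c \<in> prime_subfield" "d \<in> prime_subfield"
      unfolding H'_def by auto
    moreover from this have "(x + y, c + d) \<in> H \<times> prime_subfield"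
      using H prime_subfield_add by (auto simp: add_closed_def)
    moreover have "u + w = (\<lambda>(x, c). x + c * h) (x + y, c + d)"
      using \<open>u = x + c * h\<close> \<open>w = y + d * h\<close> by (simp add: distrib_right)
    ultimately show "u + w \<in> H'"
      unfolding H'_def by (metis (no_types) image_eqI)
  qed
  have "inj_on (\<lambda>(x, c). x + c * h) (H \<times> prime_subfield)"
  proof (rule inj_onI, clarify)
    fix x c y d assume xy: "x \<in> H" "y \<in> H" and cd: "c \<in> prime_subfield" "d \<in> prime_subfield"
      and eq: "x + c * h = y + d * h"
    have "c = d"
    proof (rule ccontr)
      assume "c \<noteq> d"
      have "(c - d) * h = y - x" using eq by (simp add: algebra_simps)
      hence "h = inverse (c - d) * (y - x)" using \<open>c \<noteq> d\<close> by (simp add: divide_simps mult.commute)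
      moreover have "c + - d \<in> prime_subfield"
        using cd by (intro prime_subfield_add prime_subfield_uminus)
      hence "inverse (c - d) \<in> prime_subfield" by (simp add: prime_subfield_inverse)
      ultimately have "h \<in> H"
        using add_closed_prime_subfield_mult[OF H] add_closed_diff[OF H xy(2,1)] by simp
      with h show False ..
    qed
    with eq show "x = y \<and> c = d" by simp
  qed
  thus "card H' = CHAR('a) * card H"
    unfolding H'_def by (simp only: card_image card_cartesian_product card_prime_subfield mult.commute)
qed

lemma card_add_closed_mult_CHAR_power:
  "add_closed (H :: 'a::{finite,field} set) \<Longrightarrow> \<exists>n. CARD('a) = card H * CHAR('a) ^ n"
proof (induction "CARD('a) - card H" arbitrary: H rule: less_induct)
  case (less H)
  show ?case
  proof (cases "H = UNIV")
    case True
    then show ?thesis by (intro exI[of _ 0]) simp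
  next
    case False
    then obtain h where h: "h \<notin> H" by blast
    define H' where "H' = (\<lambda>(x, c). x + c * h) ` (H \<times> prime_subfield)"
    have H': "add_closed H'" "card H' = CHAR('a) * card H"
      unfolding H'_def by (fact add_closed_extend[OF less.prems h])+
    have "card H > 0" using less.prems by (auto simp: add_closed_def card_gt_0_iff)
    hence "card H < card H'" using H'(2) CHAR_finite_field_ge_2[where 'a='a] by simp
    hence "CARD('a) - card H' < CARD('a) - card H"
      using card_mono[of UNIV H'] by simp
    then obtain n where "CARD('a) = card H' * CHAR('a) ^ n" using less.hyps[OF _ H'(1)] by blast
    then have "CARD('a) = card H * CHAR('a) ^ Suc n" unfolding H'(2) by (simp add: ac_simps)
    then show ?thesis ..
  qed
qed

lemma CHAR_power_ext_degree: "CHAR('a::{finite,field}) ^ ext_degree TYPE('a) = CARD('a)"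
proof -
  have "add_closed {0::'a}" by (simp add: add_closed_def)
  then obtain n where n: "CARD('a) = CHAR('a) ^ n"
    using card_add_closed_mult_CHAR_power by fastforce
  have "ext_degree TYPE('a) = n"
    unfolding ext_degree_def
    by (rule the_equality) (use n CHAR_finite_field_ge_2[where 'a='a] in \<open>auto simp: power_inject_exp\<close>)
  with n show ?thesis by simp
qed

section \<open>The absolute trace and its additive character\<close>

lemma abs_trace_add: "abs_trace (x + y :: 'a::{finite,field}) = abs_trace x + abs_trace y"
  unfolding abs_trace_def
  by (simp add: freshmans_dream'[OF prime_CHAR_finite_field refl] sum.distrib)

lemma abs_trace_in_prime_subfield: "abs_trace (x :: 'a::{finite,field}) \<in> prime_subfield"
proof -
  define n where "n = ext_degree TYPE('a)"
  define f where "f i = x ^ (CHAR('a) ^ i)" for i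
  have "f n = f 0"
    unfolding f_def n_def CHAR_power_ext_degree by (simp add: power_card_finite_field)
  have "abs_trace x ^ CHAR('a) = (\<Sum>i<n. f i ^ CHAR('a))"
    unfolding abs_trace_def n_def f_def by (rule freshmans_dream_sum[OF prime_CHAR_finite_field refl])
  also have "\<dots> = (\<Sum>i<n. f (Suc i))"
    unfolding f_def by (simp add: power_mult[symmetric] mult.commute)
  also have "\<dots> = (\<Sum>i<n. f i)"
    using sum.lessThan_Suc_shift[of f n] \<open>f n = f 0\<close> by (simp add: add.commute)
  finally show ?thesis unfolding prime_subfield_def abs_trace_def n_def f_def by simp
qed

lemma abs_trace_mult_prime_subfield:
  "c \<in> prime_subfield \<Longrightarrow> abs_trace (c * x) = c * abs_trace (x :: 'a::{finite,field})"
  unfolding abs_trace_def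
  by (simp add: power_mult_distrib prime_subfield_power_CHAR_power sum_distrib_left)

text \<open>The trace is a nonzero polynomial of degree \<open>p\<^sup>n\<^sup>-\<^sup>1 < q\<close>, so it cannot vanish everywhere.\<close>
lemma abs_trace_nonzero: "\<exists>x::'a::{finite,field}. abs_trace x \<noteq> 0"
proof -
  let ?p = "CHAR('a)"
  define n where "n = ext_degree TYPE('a)"
  have q: "?p ^ n = CARD('a)" unfolding n_def by (rule CHAR_power_ext_degree)
  have p2: "?p \<ge> 2" by (rule CHAR_finite_field_ge_2)
  have "n \<noteq> 0" using q card_finite_field_ge_2[where 'a='a] by (intro notI) simp
  define T :: "'a poly" where "T = (\<Sum>i<n. monom 1 (?p ^ i))"
  have "coeff T (?p ^ (n - 1)) = (\<Sum>i<n. if i = n - 1 then 1 else 0)"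
    unfolding T_def coeff_sum using p2 by (intro sum.cong) (auto simp: power_inject_exp)
  also have "\<dots> = 1" using \<open>n \<noteq> 0\<close> by simp
  finally have "T \<noteq> 0" by auto
  have "degree T \<le> ?p ^ (n - 1)"
    unfolding T_def
  proof (rule degree_sum_le)
    fix i assume "i \<in> {..<n}"
    hence "?p ^ i \<le> ?p ^ (n - 1)" using p2 by (intro power_increasing) auto
    thus "degree (monom (1::'a) (?p ^ i)) \<le> ?p ^ (n - 1)" using degree_monom_le order_trans by blast
  qed simp
  also have "?p ^ (n - 1) < CARD('a)" unfolding q[symmetric] using p2 \<open>n \<noteq> 0\<close>
    by (intro power_strict_increasing) auto
  finally have "card {x. poly T x = 0} < CARD('a)"
    using card_poly_roots_bound[OF \<open>T \<noteq> 0\<close>] by linarith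
  then obtain x where "poly T x \<noteq> 0" by (metis (mono_tags, lifting) UNIV_eq_I less_irrefl mem_Collect_eq)
  moreover have "poly T x = abs_trace x"
    unfolding T_def abs_trace_def n_def by (simp add: poly_sum poly_monom)
  ultimately show ?thesis by auto
qed

lemma abs_trace_eq_1: "\<exists>x::'a::{finite,field}. abs_trace x = 1"
proof -
  obtain x :: 'a where x: "abs_trace x \<noteq> 0" using abs_trace_nonzero by blast
  have "inverse (abs_trace x) \<in> prime_subfield"
    by (intro prime_subfield_inverse abs_trace_in_prime_subfield)
  hence "abs_trace (inverse (abs_trace x) * x) = 1"
    using x by (simp add: abs_trace_mult_prime_subfield)
  thus ?thesis ..
qed

lemma trace_nat_less_CHAR: "trace_nat (x::'a::{finite,field}) < CHAR('a)"
  and of_nat_trace_nat: "of_nat (trace_nat x) = abs_trace x"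
proof -
  have "\<exists>!k. k < CHAR('a) \<and> (of_nat k::'a) = abs_trace x"
    using abs_trace_in_prime_subfield[of x] of_nat_eq_iff_below_CHAR[where 'a='a]
    by (auto simp: prime_subfield_eq)
  from theI'[OF this] show "trace_nat x < CHAR('a)" "of_nat (trace_nat x) = abs_trace x"
    unfolding trace_nat_def by simp_all
qed

lemma trace_nat_eqI: "k < CHAR('a) \<Longrightarrow> of_nat k = abs_trace (x::'a::{finite,field}) \<Longrightarrow> trace_nat x = k"
  using trace_nat_less_CHAR[of x] of_nat_trace_nat[of x] of_nat_eq_iff_below_CHAR[where 'a='a] by metis

lemma omega_tr_eq_cis: "omega_tr (x::'a::{finite,field}) = cis (2 * pi / CHAR('a)) ^ trace_nat x"
  unfolding omega_tr_def cis_conv_exp by (simp add: mult_ac)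

lemma cis_power_CHAR: "cis (2 * pi / CHAR('a::{finite,field})) ^ CHAR('a) = 1"
  using CHAR_finite_field_ge_2[where 'a='a] by (simp add: DeMoivre)

lemma omega_tr_add: "omega_tr (x + y :: 'a::{finite,field}) = omega_tr x * omega_tr y"
proof -
  let ?p = "CHAR('a)" and ?\<omega> = "cis (2 * pi / CHAR('a))"
  have "[trace_nat (x + y) = trace_nat x + trace_nat y] (mod ?p)"
    by (simp only: of_nat_eq_iff_cong_CHAR[where 'a='a, symmetric] of_nat_add of_nat_trace_nat
        abs_trace_add)
  hence "trace_nat (x + y) = (trace_nat x + trace_nat y) mod ?p"
    using trace_nat_less_CHAR[of "x + y"] by (simp add: cong_def)
  moreover have "?\<omega> ^ (k mod ?p) = ?\<omega> ^ k" for k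
  proof -
    have "?\<omega> ^ k = (?\<omega> ^ ?p) ^ (k div ?p) * ?\<omega> ^ (k mod ?p)"
      by (simp flip: power_mult power_add)
    thus ?thesis by (simp add: cis_power_CHAR)
  qed
  ultimately show ?thesis by (simp add: omega_tr_eq_cis power_add)
qed

lemma omega_tr_0 [simp]: "omega_tr (0::'a::{finite,field}) = 1"
proof -
  have "trace_nat (0::'a) = 0"
    using CHAR_finite_field_ge_2[where 'a='a]
    by (intro trace_nat_eqI) (simp_all add: abs_trace_def power_0_left)
  thus ?thesis by (simp add: omega_tr_eq_cis)
qed

lemma norm_omega_tr [simp]: "norm (omega_tr (x::'a::{finite,field})) = 1"
  by (simp add: omega_tr_eq_cis norm_power)

lemma cnj_omega_tr: "cnj (omega_tr (x::'a::{finite,field})) = omega_tr (- x)"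
proof -
  have "omega_tr x * omega_tr (- x) = 1" by (simp flip: omega_tr_add)
  moreover have "omega_tr x * cnj (omega_tr x) = 1"
    using complex_norm_square[of "omega_tr x"] by simp
  ultimately show ?thesis by (metis mult.left_commute mult.right_neutral)
qed

lemma omega_tr_diff: "omega_tr (x - y :: 'a::{finite,field}) = omega_tr x * cnj (omega_tr y)"
  by (simp add: cnj_omega_tr flip: omega_tr_add)

lemma omega_tr_nontrivial: "\<exists>t::'a::{finite,field}. omega_tr t \<noteq> 1"
proof -
  let ?p = "CHAR('a)"
  obtain t :: 'a where "abs_trace t = 1" using abs_trace_eq_1 by blast
  hence "trace_nat t = 1"
    using CHAR_finite_field_ge_2[where 'a='a] by (intro trace_nat_eqI) simp_all
  have "inj_on (\<lambda>k. cis (2 * pi * real k / ?p)) {..<?p}"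
    using bij_betw_roots_unity[of ?p] CHAR_finite_field_ge_2[where 'a='a] by (simp add: bij_betw_def)
  moreover have "1 \<in> {..<?p}" "0 \<in> {..<?p}" using CHAR_finite_field_ge_2[where 'a='a] by auto
  ultimately have "cis (2 * pi * real 1 / ?p) \<noteq> cis (2 * pi * real 0 / ?p)"
    by (metis inj_onD zero_neq_one)
  hence "cis (2 * pi / ?p) \<noteq> 1" by simp
  with \<open>trace_nat t = 1\<close> show ?thesis by (intro exI[of _ t]) (simp add: omega_tr_eq_cis)
qed

section \<open>Character sums\<close>

lemma sum_translate_UNIV:
  "(\<Sum>x\<in>UNIV. g (x + t)) = (\<Sum>x\<in>(UNIV::'a::{finite,ab_group_add} set). g x)"
  by (rule sum.reindex_bij_witness[of _ "\<lambda>y. y - t" "\<lambda>y. y + t"]) auto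

lemma sum_omega_tr: "(\<Sum>x\<in>UNIV. omega_tr (x::'a::{finite,field})) = 0"
proof -
  obtain t :: 'a where t: "omega_tr t \<noteq> 1" using omega_tr_nontrivial by blast
  have "(\<Sum>x::'a\<in>UNIV. omega_tr x) = (\<Sum>x\<in>UNIV. omega_tr (x + t))"
    by (rule sum_translate_UNIV[symmetric])
  also have "\<dots> = omega_tr t * (\<Sum>x::'a\<in>UNIV. omega_tr x)"
    by (simp add: omega_tr_add sum_distrib_left mult.commute)
  finally have "(1 - omega_tr t) * (\<Sum>x::'a\<in>UNIV. omega_tr x) = 0" by (simp add: algebra_simps)
  with t show ?thesis by simp
qed

lemma sum_omega_tr_bij:
  assumes "bij (f :: 'a::{finite,field} \<Rightarrow> 'a)"
  shows "(\<Sum>x\<in>UNIV. omega_tr (f x)) = 0"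
  using sum.reindex_bij_betw[of f UNIV UNIV omega_tr] assms sum_omega_tr by (simp add: bij_def)

lemma norm_sum_omega_tr_planar:
  fixes g :: "'a::{finite,field} \<Rightarrow> 'a"
  assumes "planar g"
  shows "norm (\<Sum>x\<in>UNIV. omega_tr (g x)) = sqrt CARD('a)"
proof -
  let ?S = "\<Sum>x\<in>UNIV. omega_tr (g x)"
  have "?S * cnj ?S = (\<Sum>y\<in>UNIV. \<Sum>x\<in>UNIV. omega_tr (g x - g y))"
    by (simp add: omega_tr_diff sum_distrib_left sum_distrib_right cnj_sum)
  also have "\<dots> = (\<Sum>y\<in>UNIV. \<Sum>h\<in>UNIV. omega_tr (g (h + y) - g y))"
    by (simp only: sum_translate_UNIV[where g = "\<lambda>x. omega_tr (g x - g _)"])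
  also have "\<dots> = (\<Sum>h\<in>UNIV. \<Sum>y\<in>UNIV. omega_tr (Delta g h y))"
    by (subst sum.swap) (simp add: Delta_def add.commute)
  also have "\<dots> = (\<Sum>h::'a\<in>UNIV. if h = 0 then of_nat CARD('a) else 0)"
  proof (intro sum.cong refl)
    fix h :: 'a
    show "(\<Sum>y\<in>UNIV. omega_tr (Delta g h y)) = (if h = 0 then of_nat CARD('a) else 0)"
      using assms sum_omega_tr_bij[of "Delta g h"] by (simp add: planar_def Delta_def)
  qed
  also have "\<dots> = of_nat CARD('a)" by simp
  finally have "complex_of_real ((norm ?S)\<^sup>2) = of_nat CARD('a)"
    by (simp only: complex_norm_square)
  hence "(norm ?S)\<^sup>2 = CARD('a)" by (metis of_real_eq_iff of_real_of_nat_eq)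
  thus ?thesis by (simp add: real_sqrt_unique)
qed

lemma planar_translate_affine:
  fixes f :: "'a::field \<Rightarrow> 'a"
  assumes "planar f"
  shows "planar (\<lambda>x. f (x + a) + c * x + d)"
  unfolding planar_def
proof (intro allI impI)
  fix h :: 'a assume "h \<noteq> 0"
  hence "bij (Delta f h)" using assms by (simp add: planar_def)
  moreover have "Delta (\<lambda>x. f (x + a) + c * x + d) h = (\<lambda>z. z + c * h) \<circ> Delta f h \<circ> (\<lambda>x. x + a)"
    by (simp add: Delta_def fun_eq_iff algebra_simps)
  moreover have "bij (\<lambda>x::'a. x + t)" for t
    by (simp add: bij_def inj_def surj_def)
  ultimately show "bij (Delta (\<lambda>x. f (x + a) + c * x + d) h)"
    by (metis bij_comp)
qed

section \<open>Orthonormal and unbiased bases\<close>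

definition std_vec :: "'i::finite \<Rightarrow> 'i \<Rightarrow> complex" where
  "std_vec i = (\<lambda>j. if j = i then 1 else 0)"

lemma std_basis_eq_range: "std_basis = range std_vec"
  by (auto simp: std_basis_def std_vec_def)

lemma hinner_std_vec_left: "hinner (std_vec i) w = w i"
proof -
  have "hinner (std_vec i) w = (\<Sum>j\<in>UNIV. if j = i then w i else 0)"
    unfolding hinner_def by (rule sum.cong) (auto simp: std_vec_def)
  thus ?thesis by simp
qed

lemma hinner_std_vec_right: "hinner w (std_vec i) = cnj (w i)"
proof -
  have "hinner w (std_vec i) = (\<Sum>j\<in>UNIV. if j = i then cnj (w i) else 0)"
    unfolding hinner_def by (rule sum.cong) (auto simp: std_vec_def)
  thus ?thesis by simp
qed

lemma orthonormal_basis_range: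
  fixes f :: "'j::finite \<Rightarrow> 'i::finite \<Rightarrow> complex"
  assumes "CARD('j) = CARD('i)" and "\<And>j k. hinner (f j) (f k) = (if j = k then 1 else 0)"
  shows "orthonormal_basis (range f)"
proof -
  have "inj f" by (rule injI) (metis assms(2) zero_neq_one)
  hence "card (range f) = CARD('i)" using assms(1) by (simp add: card_image)
  moreover have "hinner (f j) (f k) = (if f j = f k then 1 else 0)" for j k
    using \<open>inj f\<close> assms(2) by (simp add: inj_eq)
  ultimately show ?thesis by (auto simp: orthonormal_basis_def)
qed

lemma orthonormal_basis_std_basis: "orthonormal_basis (std_basis :: ('i::finite \<Rightarrow> complex) set)"
proof -
  have "hinner (std_vec j) (std_vec k) = (if j = k then 1 else 0)" for j k :: 'i
    by (simp only: hinner_std_vec_left) (simp add: std_vec_def)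
  thus ?thesis unfolding std_basis_eq_range by (intro orthonormal_basis_range) simp_all
qed

lemma unbiased_std_basis:
  fixes B :: "('i::finite \<Rightarrow> complex) set"
  assumes "\<And>y i. y \<in> B \<Longrightarrow> norm (y i) = 1 / sqrt CARD('i)"
  shows "unbiased std_basis B" "unbiased B std_basis"
  using assms by (auto simp: unbiased_def std_basis_eq_range hinner_std_vec_left hinner_std_vec_right)

text \<open>In dimension at least 2 unbiased bases are distinct, so a family of pairwise unbiased
  bases has as many members as indices.\<close>
lemma complete_MUB_range:
  fixes \<B> :: "'j::finite \<Rightarrow> ('i::finite \<Rightarrow> complex) set"
  assumes "CARD('i) \<ge> 2" and "CARD('j) = CARD('i) + 1"
    and orth: "\<And>j. orthonormal_basis (\<B> j)"
    and unb: "\<And>j k. j \<noteq> k \<Longrightarrow> unbiased (\<B> j) (\<B> k)"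
  shows "complete_MUB (range \<B>)"
proof -
  have "inj \<B>"
  proof (rule injI, rule ccontr)
    fix j k assume eq: "\<B> j = \<B> k" and "j \<noteq> k"
    have "card (\<B> j) = CARD('i)" using orth by (simp add: orthonormal_basis_def)
    then obtain x where x: "x \<in> \<B> j" using assms(1) by fastforce
    hence "hinner x x = 1" using orth[of j] by (simp add: orthonormal_basis_def)
    moreover have "norm (hinner x x) = 1 / sqrt CARD('i)"
      using unb[OF \<open>j \<noteq> k\<close>] x eq by (simp add: unbiased_def)
    ultimately show False using assms(1) by simp
  qed
  hence "card (range \<B>) = CARD('i) + 1" using assms(2) by (simp add: card_image)
  moreover have "mutually_unbiased (range \<B>)"
    using orth unb by (simp add: mutually_unbiased_def) metis
  ultimately show ?thesis by (simp add: complete_MUB_def)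
qed

section \<open>Alltop bases\<close>

definition alltop_vector :: "('a::{finite,field} \<Rightarrow> 'a) \<Rightarrow> 'a \<Rightarrow> 'a \<Rightarrow> 'a \<Rightarrow> complex" where
  "alltop_vector A a b =
     (\<lambda>x. complex_of_real (1 / sqrt CARD('a)) * omega_tr (A (x + a) + b * (x + a)))"

lemma norm_alltop_vector:
  "norm (alltop_vector (A :: 'a::{finite,field} \<Rightarrow> 'a) a b x) = 1 / sqrt CARD('a)"
  by (simp add: alltop_vector_def norm_divide)

lemma hinner_alltop_vector:
  fixes A :: "'a::{finite,field} \<Rightarrow> 'a"
  shows "hinner (alltop_vector A a b) (alltop_vector A a' b') =
    (\<Sum>x\<in>UNIV. omega_tr (A (x + a') + b' * (x + a') - (A (x + a) + b * (x + a)))) / CARD('a)"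
proof -
  have "complex_of_real (sqrt CARD('a)) * complex_of_real (sqrt CARD('a)) = of_nat CARD('a)"
    by (simp flip: of_real_mult)
  thus ?thesis by (simp add: hinner_def alltop_vector_def omega_tr_diff sum_divide_distrib mult_ac)
qed

lemma hinner_alltop_vector_same_shift:
  "hinner (alltop_vector A a b) (alltop_vector A a b') = (if b = b' then 1 else 0)"
proof (cases "b = b'")
  case False
  have "inj (\<lambda>x. (b' - b) * (x + a))"
    using False by (intro injI) auto
  hence "bij (\<lambda>x. (b' - b) * (x + a))" by (simp add: bij_def finite_UNIV_inj_surj)
  hence "(\<Sum>x\<in>UNIV. omega_tr ((b' - b) * (x + a))) = 0" by (rule sum_omega_tr_bij)
  with False show ?thesis by (simp add: hinner_alltop_vector algebra_simps)
qed (simp add: hinner_alltop_vector)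

lemma norm_hinner_alltop_vector:
  fixes A :: "'a::{finite,field} \<Rightarrow> 'a"
  assumes "alltop A" and "a \<noteq> a'"
  shows "norm (hinner (alltop_vector A a b) (alltop_vector A a' b')) = 1 / sqrt CARD('a)"
proof -
  have "planar (Delta A (a' - a))" using assms by (simp add: alltop_def)
  hence "planar (\<lambda>x. Delta A (a' - a) (x + a) + (b' - b) * x + (b' * a' - b * a))"
    by (rule planar_translate_affine)
  also have "(\<lambda>x. Delta A (a' - a) (x + a) + (b' - b) * x + (b' * a' - b * a)) =
      (\<lambda>x. A (x + a') + b' * (x + a') - (A (x + a) + b * (x + a)))"
    by (simp add: Delta_def fun_eq_iff algebra_simps)
  finally have "norm (hinner (alltop_vector A a b) (alltop_vector A a' b')) = sqrt CARD('a) / CARD('a)"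
    by (simp add: hinner_alltop_vector norm_divide norm_sum_omega_tr_planar)
  also have "\<dots> = 1 / sqrt CARD('a)" by (simp add: divide_simps)
  finally show ?thesis .
qed

lemma orthonormal_basis_alltop_vector: "orthonormal_basis (range (alltop_vector A a))"
  by (rule orthonormal_basis_range) (simp_all add: hinner_alltop_vector_same_shift)

lemma unbiased_alltop_vector_bases:
  assumes "alltop A" and "a \<noteq> a'"
  shows "unbiased (range (alltop_vector A a)) (range (alltop_vector A a'))"
  using norm_hinner_alltop_vector[OF assms] by (auto simp: unbiased_def)

theorem theorem7:
  fixes A :: "'a::{finite,field} \<Rightarrow> 'a"
  assumes "CHAR('a) \<ge> 5"
    and "alltop A"
  defines "v \<equiv> (\<lambda>a b. (\<lambda>x::'a. complex_of_real (1 / sqrt (real CARD('a)))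
                          * omega_tr (A (x + a) + b * (x + a))))"
  defines "V \<equiv> (\<lambda>a. {v a b | b. True})"
  shows "complete_MUB (insert std_basis (V ` UNIV))"
proof -
  define \<B> where "\<B> = case_option std_basis (\<lambda>a. range (alltop_vector A a))"
  have "V a = range (alltop_vector A a)" for a
    by (auto simp: V_def v_def alltop_vector_def)
  hence "insert std_basis (V ` UNIV) = range \<B>"
    by (simp add: \<B>_def UNIV_option_conv image_image)
  moreover have "complete_MUB (range \<B>)"
  proof (rule complete_MUB_range)
    show "CARD('a) \<ge> 2" by (rule card_finite_field_ge_2)
    show "orthonormal_basis (\<B> j)" for j
      by (cases j) (simp_all add: \<B>_def orthonormal_basis_std_basis orthonormal_basis_alltop_vector)
    have "unbiased std_basis (range (alltop_vector A a))"
      "unbiased (range (alltop_vector A a)) std_basis" for a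
      by (auto intro: unbiased_std_basis simp: norm_alltop_vector)
    thus "unbiased (\<B> j) (\<B> k)" if "j \<noteq> k" for j k
      using that by (cases j; cases k) (simp_all add: \<B>_def unbiased_alltop_vector_bases assms(2))
  qed simp
  ultimately show ?thesis by simp
qed

end
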